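(* Suppose $\partial\overline{\mathcal{G}}$ is not a set of isolated points, i.e. some point of $\partial\overline{\mathcal{G}}$ is a limit point of $\partial\overline{\mathcal{G}}$. Then there is a continuous function $F:\partial\overline{\mathcal{G}}\to\mathbb{R}$ such that no harmonic function $g$ on $\overline{\mathcal{G}}$ with $g=F$ on $\partial\overline{\mathcal{G}}$ belongs to $\mathbb{H}_1$.
   Context: $\mathcal{G}$ is a connected, locally finite metric graph with countable vertex set and countable edge set. Each edge has a positive length and is identified with an interval. $\mathcal{G}$ carries the geodesic distance $d$, and $\overline{\mathcal{G}}$ is its metric completion. A designated set of vertices, containing all vertices of degree $1$, forms the boundary vertices. $\mathcal{G}_{int}$ is $\mathcal{G}$ minus the boundary vertices, and $\partial\overline{\mathcal{G}}=\overline{\mathcal{G}}\setminus\mathcal{G}_{int}$. Standing assumptions: $\overline{\mathcal{G}}$ is compact and $\partial\overline{\mathcal{G}}$ is totally disconnected. A function $f:\overline{\mathcal{G}}\to\mathbb{R}$ is harmonic if it is continuous, linear on each edge, and satisfies $\sum_{e\sim v}\partial_\nu f_e(v)=0$ at every interior vertex $v$, where $\partial_\nu f_e(v)$ is the derivative of $f_e$ at $v$ in the direction pointing from $v$ into the edge $e$. $\mathbb{H}_1$ is the set of $f:\overline{\mathcal{G}}\to\mathbb{R}$ that are continuous on $\overline{\mathcal{G}}$, absolutely continuous on each edge, and have $f'\in L^2(\mathcal{G})$. *)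

theory Defs
  imports "HOL-Analysis.Analysis"
begin

text \<open>A metric graph is given by a vertex set V, an edge set E, endpoint maps
  src, tgt (edge e is identified with the interval [0, len e], src e at 0 and
  tgt e at len e) and lengths len. Loops and multiple edges are allowed.\<close>

datatype ('v, 'e) gpt = Vtx 'v | Ept 'e real

definition gdegree :: "'v set \<Rightarrow> 'e set \<Rightarrow> ('e \<Rightarrow> 'v) \<Rightarrow> ('e \<Rightarrow> 'v) \<Rightarrow> 'v \<Rightarrow> nat" where
  "gdegree V E src tgt v = card {e\<in>E. src e = v} + card {e\<in>E. tgt e = v}"

inductive walk :: "'e set \<Rightarrow> ('e \<Rightarrow> 'v) \<Rightarrow> ('e \<Rightarrow> 'v) \<Rightarrow> 'v \<Rightarrow> 'e list \<Rightarrow> 'v \<Rightarrow> bool"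
  for E src tgt where
  walk_nil: "walk E src tgt u [] u"
| walk_fwd: "e \<in> E \<Longrightarrow> src e = u \<Longrightarrow> walk E src tgt (tgt e) es w \<Longrightarrow> walk E src tgt u (e # es) w"
| walk_bwd: "e \<in> E \<Longrightarrow> tgt e = u \<Longrightarrow> walk E src tgt (src e) es w \<Longrightarrow> walk E src tgt u (e # es) w"

definition metric_graph ::
  "'v set \<Rightarrow> 'e set \<Rightarrow> ('e \<Rightarrow> 'v) \<Rightarrow> ('e \<Rightarrow> 'v) \<Rightarrow> ('e \<Rightarrow> real) \<Rightarrow> bool" where
  "metric_graph V E src tgt len \<longleftrightarrow>
     V \<noteq> {} \<and> countable V \<and> countable E \<and>
     (\<forall>e\<in>E. src e \<in> V \<and> tgt e \<in> V \<and> len e > 0) \<and>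
     (\<forall>v\<in>V. finite {e\<in>E. src e = v \<or> tgt e = v}) \<and>
     (\<forall>u\<in>V. \<forall>w\<in>V. \<exists>es. walk E src tgt u es w)"

definition gpoints :: "'v set \<Rightarrow> 'e set \<Rightarrow> ('e \<Rightarrow> real) \<Rightarrow> ('v, 'e) gpt set" where
  "gpoints V E len = Vtx ` V \<union> {Ept e t | e t. e \<in> E \<and> 0 < t \<and> t < len e}"

definition epos :: "('e \<Rightarrow> 'v) \<Rightarrow> ('e \<Rightarrow> 'v) \<Rightarrow> ('e \<Rightarrow> real) \<Rightarrow> 'e \<Rightarrow> real \<Rightarrow> ('v, 'e) gpt" where
  "epos src tgt len e t = (if t = 0 then Vtx (src e) else if t = len e then Vtx (tgt e) else Ept e t)"

definition vdist :: "'e set \<Rightarrow> ('e \<Rightarrow> 'v) \<Rightarrow> ('e \<Rightarrow> 'v) \<Rightarrow> ('e \<Rightarrow> real) \<Rightarrow> 'v \<Rightarrow> 'v \<Rightarrow> real" where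
  "vdist E src tgt len u w = Inf {sum_list (map len es) | es. walk E src tgt u es w}"

text \<open>Anchors of a point: the vertices through which it can be left, with the distance to them.\<close>
fun anchors :: "('e \<Rightarrow> 'v) \<Rightarrow> ('e \<Rightarrow> 'v) \<Rightarrow> ('e \<Rightarrow> real) \<Rightarrow> ('v, 'e) gpt \<Rightarrow> ('v \<times> real) set" where
  "anchors src tgt len (Vtx v) = {(v, 0)}"
| "anchors src tgt len (Ept e t) = {(src e, t), (tgt e, len e - t)}"

definition gdist :: "'e set \<Rightarrow> ('e \<Rightarrow> 'v) \<Rightarrow> ('e \<Rightarrow> 'v) \<Rightarrow> ('e \<Rightarrow> real) \<Rightarrow>
    ('v, 'e) gpt \<Rightarrow> ('v, 'e) gpt \<Rightarrow> real" where
  "gdist E src tgt len x y =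
    (let through = Inf {a + vdist E src tgt len u w + b | u a w b.
                          (u, a) \<in> anchors src tgt len x \<and> (w, b) \<in> anchors src tgt len y}
     in case (x, y) of
          (Ept e s, Ept e' t) \<Rightarrow> (if e = e' then min \<bar>s - t\<bar> through else through)
        | _ \<Rightarrow> through)"

definition is_completion ::
  "'v set \<Rightarrow> 'e set \<Rightarrow> ('e \<Rightarrow> 'v) \<Rightarrow> ('e \<Rightarrow> 'v) \<Rightarrow> ('e \<Rightarrow> real) \<Rightarrow>
   'x::metric_space set \<Rightarrow> (('v, 'e) gpt \<Rightarrow> 'x) \<Rightarrow> bool" where
  "is_completion V E src tgt len X \<iota> \<longleftrightarrow>
     complete X \<and> \<iota> ` gpoints V E len \<subseteq> X \<and> X \<subseteq> closure (\<iota> ` gpoints V E len) \<and>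
     (\<forall>x\<in>gpoints V E len. \<forall>y\<in>gpoints V E len. dist (\<iota> x) (\<iota> y) = gdist E src tgt len x y)"

definition totally_disconnected :: "'a::topological_space set \<Rightarrow> bool" where
  "totally_disconnected S \<longleftrightarrow> (\<forall>x\<in>S. connected_component_set S x = {x})"

definition cbdry ::
  "'v set \<Rightarrow> 'e set \<Rightarrow> ('e \<Rightarrow> real) \<Rightarrow> 'v set \<Rightarrow> 'x set \<Rightarrow> (('v, 'e) gpt \<Rightarrow> 'x) \<Rightarrow> 'x set" where
  "cbdry V E len B X \<iota> = X - \<iota> ` (gpoints V E len - Vtx ` B)"

text \<open>Harmonic: continuous on the completion, linear on each edge, Kirchhoff
  condition at every interior vertex (the derivative into the edge is the slope
  at the src end and minus the slope at the tgt end).\<close>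
definition harmonic ::
  "'v set \<Rightarrow> 'e set \<Rightarrow> ('e \<Rightarrow> 'v) \<Rightarrow> ('e \<Rightarrow> 'v) \<Rightarrow> ('e \<Rightarrow> real) \<Rightarrow> 'v set \<Rightarrow>
   'x::metric_space set \<Rightarrow> (('v, 'e) gpt \<Rightarrow> 'x) \<Rightarrow> ('x \<Rightarrow> real) \<Rightarrow> bool" where
  "harmonic V E src tgt len B X \<iota> f \<longleftrightarrow>
     continuous_on X f \<and>
     (\<forall>e\<in>E. \<exists>a b. \<forall>t\<in>{0..len e}. f (\<iota> (epos src tgt len e t)) = a + b * t) \<and>
     (\<forall>v\<in>V - B.
        (\<Sum>e\<in>{e\<in>E. src e = v}. (f (\<iota> (Vtx (tgt e))) - f (\<iota> (Vtx (src e)))) / len e)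
      + (\<Sum>e\<in>{e\<in>E. tgt e = v}. - ((f (\<iota> (Vtx (tgt e))) - f (\<iota> (Vtx (src e)))) / len e)) = 0)"

definition abs_cont_on :: "real \<Rightarrow> real \<Rightarrow> (real \<Rightarrow> real) \<Rightarrow> bool" where
  "abs_cont_on a b f \<longleftrightarrow>
    (\<forall>\<epsilon>>0. \<exists>\<delta>>0. \<forall>(n::nat) (l::nat \<Rightarrow> real) (r::nat \<Rightarrow> real).
       (\<forall>i<n. a \<le> l i \<and> l i \<le> r i \<and> r i \<le> b) \<and>
       (\<forall>i<n. \<forall>j<n. i \<noteq> j \<longrightarrow> r i \<le> l j \<or> r j \<le> l i) \<and>
       (\<Sum>i<n. r i - l i) < \<delta>
       \<longrightarrow> (\<Sum>i<n. \<bar>f (r i) - f (l i)\<bar>) < \<epsilon>)"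

definition H1 ::
  "'v set \<Rightarrow> 'e set \<Rightarrow> ('e \<Rightarrow> 'v) \<Rightarrow> ('e \<Rightarrow> 'v) \<Rightarrow> ('e \<Rightarrow> real) \<Rightarrow>
   'x::metric_space set \<Rightarrow> (('v, 'e) gpt \<Rightarrow> 'x) \<Rightarrow> ('x \<Rightarrow> real) \<Rightarrow> bool" where
  "H1 V E src tgt len X \<iota> f \<longleftrightarrow>
     continuous_on X f \<and>
     (\<forall>e\<in>E. abs_cont_on 0 (len e) (\<lambda>t. f (\<iota> (epos src tgt len e t)))) \<and>
     (\<exists>h :: 'e \<Rightarrow> real \<Rightarrow> real.
        (\<forall>e\<in>E. AE t in lebesgue. t \<in> {0<..<len e} \<longrightarrow>
                  ((\<lambda>s. f (\<iota> (epos src tgt len e s))) has_real_derivative h e t) (at t)) \<and>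
        (\<forall>e\<in>E. set_integrable lebesgue {0..len e} (\<lambda>t. (h e t)\<^sup>2)) \<and>
        (\<lambda>e. set_lebesgue_integral lebesgue {0..len e} (\<lambda>t. (h e t)\<^sup>2)) summable_on E)"

end

theory Submission
  imports Defs
begin

text \<open>A harmonic function g is affine on every edge, so its energy on an edge e of length
  \<open>\<ell>\<close> and slope b is \<open>b\<^sup>2 \<ell>\<close>, and membership in \<open>H\<^sub>1\<close> means that the total energy D is finite.
  By AM-GM, \<open>2 \<bar>b\<bar> c \<le> \<mu> b\<^sup>2 \<ell> + c / \<mu>\<close> for every \<open>\<mu> > 0\<close> and every piece of length
  \<open>c \<le> \<ell>\<close> of the edge. Summing over a path made of two partial edges and a walk of total
  length L gives \<open>2 \<bar>g x - g y\<bar> \<le> 3 \<mu> D + L / \<mu>\<close>; this bound is linear in L, hence survives the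
  infimum defining the geodesic distance, and by continuity it extends to the completion.
  Taking \<open>\<mu> = sqrt (d p q)\<close> shows that g is Hoelder continuous of exponent 1/2. The boundary
  datum F, the fourth root of the distance to a non-isolated boundary point p, is not.\<close>

lemma set_integral_square_derivative_affine:
  fixes \<phi> h :: "real \<Rightarrow> real"
  assumes affine: "\<And>t. t \<in> {0..l} \<Longrightarrow> \<phi> t = a + b * t"
    and deriv: "AE t in lebesgue. t \<in> {0<..<l} \<longrightarrow> (\<phi> has_real_derivative h t) (at t)"
    and integrable: "set_integrable lebesgue {0..l} (\<lambda>t. (h t)\<^sup>2)"
    and "0 \<le> l"
  shows "set_lebesgue_integral lebesgue {0..l} (\<lambda>t. (h t)\<^sup>2) = b\<^sup>2 * l"
proof -
  have "AE t in lebesgue. t \<notin> {0, l}"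
    by (rule AE_not_in) simp
  then have "AE t in lebesgue. indicator {0..l} t *\<^sub>R (h t)\<^sup>2 = indicator {0..l} t *\<^sub>R b\<^sup>2"
    using deriv
  proof eventually_elim
    case (elim t)
    show ?case
    proof (cases "t \<in> {0<..<l}")
      case True
      with elim have "(\<phi> has_real_derivative h t) (at t)" by auto
      then have "((\<lambda>s. a + b * s) has_real_derivative h t) (at t)"
        by (rule has_field_derivative_transform_within_open[of _ _ _ "{0<..<l}"])
          (use True affine in auto)
      moreover have "((\<lambda>s. a + b * s) has_real_derivative b) (at t)"
        by (auto intro!: derivative_eq_intros)
      ultimately have "h t = b" by (rule DERIV_unique)
      then show ?thesis by simp
    qed (use elim in auto)
  qed
  moreover have "(\<lambda>t. indicator {0..l} t *\<^sub>R (h t)\<^sup>2) \<in> borel_measurable lebesgue"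
    using integrable unfolding set_integrable_def by (rule borel_measurable_integrable)
  moreover have "(\<lambda>t. indicator {0..l} t *\<^sub>R b\<^sup>2) \<in> borel_measurable lebesgue"
    by (intro borel_measurable_scaleR borel_measurable_indicator) auto
  ultimately have "set_lebesgue_integral lebesgue {0..l} (\<lambda>t. (h t)\<^sup>2)
      = set_lebesgue_integral lebesgue {0..l} (\<lambda>t. b\<^sup>2)"
    unfolding set_lebesgue_integral_def by (intro integral_cong_AE) auto
  also have "\<dots> = b\<^sup>2 * l"
    using \<open>0 \<le> l\<close> by (subst set_integral_const) auto
  finally show ?thesis .
qed

lemma abs_mult_le_amgm:
  fixes b c \<mu> :: real
  assumes "0 < \<mu>" "0 \<le> c"
  shows "\<bar>b\<bar> * c \<le> (\<mu> * b\<^sup>2 * c + c / \<mu>) / 2"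
proof -
  have "0 \<le> c * (\<mu> * \<bar>b\<bar> - 1)\<^sup>2 / \<mu>"
    using assms by simp
  then show ?thesis
    using assms by (simp add: power2_eq_square field_simps)
qed

lemma le_amgm_Inf:
  fixes a c \<mu> :: real
  assumes "T \<noteq> {}" "0 < \<mu>" "\<And>L. L \<in> T \<Longrightarrow> a \<le> (c + L / \<mu>) / 2"
  shows "a \<le> (c + Inf T / \<mu>) / 2"
proof -
  have "\<mu> * (2 * a - c) \<le> Inf T"
    by (rule cInf_greatest) (use assms in \<open>auto simp: field_simps\<close>)
  then show ?thesis
    using assms(2) by (simp add: field_simps)
qed

lemma sum_set_le_sum_list:
  fixes f :: "'a \<Rightarrow> real"
  assumes "\<And>x. x \<in> set xs \<Longrightarrow> 0 \<le> f x"
  shows "sum f (set xs) \<le> sum_list (map f xs)"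
  using assms by (induction xs) (auto simp: insert_absorb sum.insert_if add_increasing)

lemma walk_edges_subset: "walk E src tgt u es w \<Longrightarrow> set es \<subseteq> E"
  by (induction rule: walk.induct) auto

lemma walk_start_mem: "walk E src tgt u es w \<Longrightarrow> u \<in> insert w (src ` set es \<union> tgt ` set es)"
  by (induction rule: walk.induct) auto

text \<open>Summing over the edge set rather than the edge list counts a repeated edge once, so the
  bound can later be compared with the total energy; the price is that the induction along a
  walk has to control h at every vertex visited so far, not just at the start.\<close>

lemma diff_le_sum_insert_edge:
  fixes h :: "'v \<Rightarrow> real" and src tgt :: "'e \<Rightarrow> 'v"
  defines "\<Phi> \<equiv> \<lambda>S. \<Sum>e\<in>S. \<bar>h (tgt e) - h (src e)\<bar>"
  assumes IH: "\<And>z. z \<in> insert w (src ` S \<union> tgt ` S) \<Longrightarrow> \<bar>h z - h w\<bar> \<le> \<Phi> S"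
    and "finite S"
    and y: "y \<in> {src e, tgt e}" "y \<in> insert w (src ` S \<union> tgt ` S)"
    and z: "z \<in> insert w (src ` insert e S \<union> tgt ` insert e S)"
  shows "\<bar>h z - h w\<bar> \<le> \<Phi> (insert e S)"
proof (cases "e \<in> S")
  case True
  then show ?thesis using IH z by (simp add: insert_absorb)
next
  case False
  then have \<Phi>_insert: "\<Phi> (insert e S) = \<bar>h (tgt e) - h (src e)\<bar> + \<Phi> S"
    using \<open>finite S\<close> by (simp add: \<Phi>_def)
  show ?thesis
  proof (cases "z \<in> {src e, tgt e}")
    case True
    then have "\<bar>h z - h y\<bar> \<le> \<bar>h (tgt e) - h (src e)\<bar>"
      using y(1) by auto
    then show ?thesis using IH[OF y(2)] \<Phi>_insert by linarith
  next
    case False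
    then have "\<bar>h z - h w\<bar> \<le> \<Phi> S" using IH z by auto
    then show ?thesis using \<Phi>_insert by simp
  qed
qed

lemma walk_diff_le_sum_edges:
  fixes h :: "'v \<Rightarrow> real"
  assumes "walk E src tgt u es w"
  shows "\<bar>h u - h w\<bar> \<le> (\<Sum>e\<in>set es. \<bar>h (tgt e) - h (src e)\<bar>)"
proof -
  have "\<bar>h z - h w\<bar> \<le> (\<Sum>e\<in>set es. \<bar>h (tgt e) - h (src e)\<bar>)"
    if "z \<in> insert w (src ` set es \<union> tgt ` set es)" for z
    using assms that
  proof (induction arbitrary: z rule: walk.induct)
    case (walk_fwd e u es w)
    show ?case unfolding list.set(2)
      by (rule diff_le_sum_insert_edge[OF walk_fwd.IH _ _ walk_start_mem[OF walk_fwd.hyps(3)]])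
        (use walk_fwd.prems in auto)
  next
    case (walk_bwd e u es w)
    show ?case unfolding list.set(2)
      by (rule diff_le_sum_insert_edge[OF walk_bwd.IH _ _ walk_start_mem[OF walk_bwd.hyps(3)]])
        (use walk_bwd.prems in auto)
  qed simp
  then show ?thesis
    using walk_start_mem[OF assms] by blast
qed

locale edgewise_affine =
  fixes V :: "'v set" and E :: "'e set" and src tgt :: "'e \<Rightarrow> 'v" and len :: "'e \<Rightarrow> real"
    and f :: "('v, 'e) gpt \<Rightarrow> real" and slope :: "'e \<Rightarrow> real" and D :: real
  assumes graph: "metric_graph V E src tgt len"
    and affine: "\<And>e t. e \<in> E \<Longrightarrow> t \<in> {0..len e} \<Longrightarrow>
                   f (epos src tgt len e t) = f (Vtx (src e)) + slope e * t"
    and energy_le: "\<And>S. finite S \<Longrightarrow> S \<subseteq> E \<Longrightarrow> (\<Sum>e\<in>S. (slope e)\<^sup>2 * len e) \<le> D"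
begin

lemma len_pos: "e \<in> E \<Longrightarrow> 0 < len e"
  using graph by (simp add: metric_graph_def)

lemma endpoints_in_V: "e \<in> E \<Longrightarrow> src e \<in> V \<and> tgt e \<in> V"
  using graph by (simp add: metric_graph_def)

lemma energy_nonneg: "0 \<le> D"
  using energy_le[of "{}"] by simp

lemma f_tgt: "e \<in> E \<Longrightarrow> f (Vtx (tgt e)) = f (Vtx (src e)) + slope e * len e"
  using affine[of e "len e"] len_pos[of e] by (simp add: epos_def)

lemma f_Ept: "e \<in> E \<Longrightarrow> 0 < t \<Longrightarrow> t < len e \<Longrightarrow> f (Ept e t) = f (Vtx (src e)) + slope e * t"
  using affine[of e t] by (simp add: epos_def)

lemma slope_mult_le:
  assumes "e \<in> E" "0 \<le> c" "c \<le> len e" "0 < \<mu>"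
  shows "\<bar>slope e\<bar> * c \<le> (\<mu> * D + c / \<mu>) / 2"
proof -
  have "(slope e)\<^sup>2 * c \<le> (slope e)\<^sup>2 * len e"
    using assms by (simp add: mult_left_mono)
  also have "\<dots> \<le> D"
    using energy_le[of "{e}"] assms by simp
  finally have "\<mu> * (slope e)\<^sup>2 * c \<le> \<mu> * D"
    using assms by (simp add: mult.assoc)
  have "\<bar>slope e\<bar> * c \<le> (\<mu> * (slope e)\<^sup>2 * c + c / \<mu>) / 2"
    using assms by (intro abs_mult_le_amgm)
  also have "\<dots> \<le> (\<mu> * D + c / \<mu>) / 2"
    using \<open>\<mu> * (slope e)\<^sup>2 * c \<le> \<mu> * D\<close> by simp
  finally show ?thesis .
qed

lemma walk_diff_le:
  assumes walk: "walk E src tgt u es w" and "0 < \<mu>"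
  shows "\<bar>f (Vtx u) - f (Vtx w)\<bar> \<le> (\<mu> * D + sum_list (map len es) / \<mu>) / 2"
proof -
  have es: "set es \<subseteq> E"
    by (rule walk_edges_subset[OF walk])
  have "\<bar>f (Vtx u) - f (Vtx w)\<bar> \<le> (\<Sum>e\<in>set es. \<bar>f (Vtx (tgt e)) - f (Vtx (src e))\<bar>)"
    by (rule walk_diff_le_sum_edges[OF walk])
  also have "\<dots> = (\<Sum>e\<in>set es. \<bar>slope e\<bar> * len e)"
    using es f_tgt len_pos by (intro sum.cong) (auto simp: abs_mult less_imp_le)
  also have "\<dots> \<le> (\<Sum>e\<in>set es. (\<mu> * (slope e)\<^sup>2 * len e + len e / \<mu>) / 2)"
    using es len_pos \<open>0 < \<mu>\<close> by (intro sum_mono abs_mult_le_amgm) (auto simp: less_imp_le)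
  also have "\<dots> = (\<mu> * (\<Sum>e\<in>set es. (slope e)\<^sup>2 * len e) + sum len (set es) / \<mu>) / 2"
    by (simp add: sum_divide_distrib sum.distrib sum_distrib_left add_divide_distrib mult.assoc)
  also have "\<dots> \<le> (\<mu> * D + sum_list (map len es) / \<mu>) / 2"
  proof -
    have "(\<Sum>e\<in>set es. (slope e)\<^sup>2 * len e) \<le> D"
      using es by (simp add: energy_le)
    moreover have "sum len (set es) \<le> sum_list (map len es)"
      using es len_pos by (intro sum_set_le_sum_list) (auto simp: less_imp_le)
    ultimately show ?thesis
      using \<open>0 < \<mu>\<close> by (intro divide_right_mono add_mono mult_left_mono) auto
  qed
  finally show ?thesis .
qed

lemma vdist_diff_le:
  assumes "u \<in> V" "w \<in> V" "0 < \<mu>"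
  shows "\<bar>f (Vtx u) - f (Vtx w)\<bar> \<le> (\<mu> * D + vdist E src tgt len u w / \<mu>) / 2"
  unfolding vdist_def
proof (rule le_amgm_Inf[OF _ \<open>0 < \<mu>\<close>])
  show "{sum_list (map len es) |es. walk E src tgt u es w} \<noteq> {}"
    using graph assms by (auto simp: metric_graph_def)
qed (blast dest: walk_diff_le[OF _ \<open>0 < \<mu>\<close>])

lemma anchor_diff_le:
  assumes x: "x \<in> gpoints V E len" and anchor: "(u, a) \<in> anchors src tgt len x" and "0 < \<mu>"
  shows "u \<in> V \<and> \<bar>f x - f (Vtx u)\<bar> \<le> (\<mu> * D + a / \<mu>) / 2"
proof (cases x)
  case (Vtx v)
  then show ?thesis
    using x anchor energy_nonneg \<open>0 < \<mu>\<close> by (auto simp: gpoints_def)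
next
  case (Ept e t)
  then have e: "e \<in> E" "0 < t" "t < len e"
    using x by (auto simp: gpoints_def)
  have "u = src e \<and> a = t \<or> u = tgt e \<and> a = len e - t"
    using anchor Ept by auto
  moreover have "\<bar>f x - f (Vtx (src e))\<bar> = \<bar>slope e\<bar> * t"
    using Ept e f_Ept by (simp add: abs_mult)
  moreover have "\<bar>f x - f (Vtx (tgt e))\<bar> = \<bar>slope e\<bar> * (len e - t)"
    using Ept e f_Ept f_tgt by (simp add: abs_mult flip: abs_minus_commute right_diff_distrib)
  ultimately show ?thesis
    using e endpoints_in_V slope_mult_le[OF e(1) _ _ \<open>0 < \<mu>\<close>] by auto
qed

lemma gdist_diff_le:
  assumes x: "x \<in> gpoints V E len" and y: "y \<in> gpoints V E len" and "0 < \<mu>"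
  shows "\<bar>f x - f y\<bar> \<le> (3 * \<mu> * D + gdist E src tgt len x y / \<mu>) / 2"
proof -
  let ?through = "{a + vdist E src tgt len u w + b | u a w b.
                    (u, a) \<in> anchors src tgt len x \<and> (w, b) \<in> anchors src tgt len y}"
  have through: "\<bar>f x - f y\<bar> \<le> (3 * \<mu> * D + Inf ?through / \<mu>) / 2"
  proof (rule le_amgm_Inf[OF _ \<open>0 < \<mu>\<close>])
    show "?through \<noteq> {}"
      by (cases x; cases y) auto
  next
    fix L assume "L \<in> ?through"
    then obtain u a w b where L: "L = a + vdist E src tgt len u w + b"
      and "(u, a) \<in> anchors src tgt len x" "(w, b) \<in> anchors src tgt len y"
      by blast
    with anchor_diff_le[OF x] anchor_diff_le[OF y] vdist_diff_le \<open>0 < \<mu>\<close>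
    have "\<bar>f x - f (Vtx u)\<bar> \<le> (\<mu> * D + a / \<mu>) / 2"
      "\<bar>f (Vtx u) - f (Vtx w)\<bar> \<le> (\<mu> * D + vdist E src tgt len u w / \<mu>) / 2"
      "\<bar>f y - f (Vtx w)\<bar> \<le> (\<mu> * D + b / \<mu>) / 2"
      by blast+
    then show "\<bar>f x - f y\<bar> \<le> (3 * \<mu> * D + L / \<mu>) / 2"
      unfolding L by (simp add: add_divide_distrib)
  qed
  show ?thesis
  proof (cases "\<exists>e s t. x = Ept e s \<and> y = Ept e t")
    case True
    then obtain e s t where xy: "x = Ept e s" "y = Ept e t"
      by blast
    then have "e \<in> E" "0 < s" "s < len e" "0 < t" "t < len e"
      using x y by (auto simp: gpoints_def)
    then have "\<bar>f x - f y\<bar> = \<bar>slope e\<bar> * \<bar>s - t\<bar>"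
      using xy f_Ept by (simp add: abs_mult flip: right_diff_distrib)
    also have "\<dots> \<le> (\<mu> * D + \<bar>s - t\<bar> / \<mu>) / 2"
      using \<open>e \<in> E\<close> \<open>s < len e\<close> \<open>t < len e\<close> \<open>0 < s\<close> \<open>0 < t\<close> \<open>0 < \<mu>\<close>
      by (intro slope_mult_le) auto
    also have "\<dots> \<le> (3 * \<mu> * D + \<bar>s - t\<bar> / \<mu>) / 2"
      using energy_nonneg \<open>0 < \<mu>\<close> by simp
    finally show ?thesis
      using through xy by (auto simp: gdist_def Let_def min_def)
  next
    case False
    then have "gdist E src tgt len x y = Inf ?through"
      unfolding gdist_def Let_def by (cases x; cases y) auto
    then show ?thesis
      using through by simp
  qed
qed

end

lemma harmonic_H1_edgewise_affine:
  assumes graph: "metric_graph V E src tgt len"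
    and harmonic: "harmonic V E src tgt len B X \<iota> g"
    and H1: "H1 V E src tgt len X \<iota> g"
  shows "\<exists>slope D. edgewise_affine V E src tgt len (g \<circ> \<iota>) slope D"
proof -
  have len_pos: "\<And>e. e \<in> E \<Longrightarrow> 0 < len e"
    using graph by (simp add: metric_graph_def)
  have "\<forall>e\<in>E. \<exists>a b. \<forall>t\<in>{0..len e}. g (\<iota> (epos src tgt len e t)) = a + b * t"
    using harmonic by (simp add: harmonic_def)
  then obtain a slope where affine:
    "\<forall>e\<in>E. \<forall>t\<in>{0..len e}. g (\<iota> (epos src tgt len e t)) = a e + slope e * t"
    by metis
  have a: "a e = g (\<iota> (Vtx (src e)))" if "e \<in> E" for e
  proof -
    have "g (\<iota> (epos src tgt len e 0)) = a e"
      using affine that len_pos[OF that] by simp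
    then show ?thesis
      by (simp add: epos_def)
  qed
  obtain h where
    deriv: "\<forall>e\<in>E. AE t in lebesgue. t \<in> {0<..<len e} \<longrightarrow>
               ((\<lambda>s. g (\<iota> (epos src tgt len e s))) has_real_derivative h e t) (at t)"
    and integrable: "\<forall>e\<in>E. set_integrable lebesgue {0..len e} (\<lambda>t. (h e t)\<^sup>2)"
    and summable: "(\<lambda>e. set_lebesgue_integral lebesgue {0..len e} (\<lambda>t. (h e t)\<^sup>2)) summable_on E"
    using H1 unfolding H1_def by blast
  have edge_energy: "set_lebesgue_integral lebesgue {0..len e} (\<lambda>t. (h e t)\<^sup>2) = (slope e)\<^sup>2 * len e"
    if "e \<in> E" for e
    by (rule set_integral_square_derivative_affine[where \<phi> = "\<lambda>t. g (\<iota> (epos src tgt len e t))"])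
      (use affine deriv integrable len_pos that in \<open>auto simp: less_imp_le\<close>)
  have slope_energy_summable: "(\<lambda>e. (slope e)\<^sup>2 * len e) summable_on E"
    using summable by (rule summable_on_cong[THEN iffD1, rotated]) (rule edge_energy)
  have energy: "(\<Sum>e\<in>S. (slope e)\<^sup>2 * len e) \<le> (\<Sum>\<^sub>\<infinity>e\<in>E. (slope e)\<^sup>2 * len e)"
    if "finite S" "S \<subseteq> E" for S
  proof -
    have "(\<Sum>\<^sub>\<infinity>e\<in>S. (slope e)\<^sup>2 * len e) \<le> (\<Sum>\<^sub>\<infinity>e\<in>E. (slope e)\<^sup>2 * len e)"
      by (rule infsum_mono_neutral) (use that slope_energy_summable len_pos in \<open>auto simp: less_imp_le\<close>)
    then show ?thesis
      using that by simp
  qed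
  have "edgewise_affine V E src tgt len (g \<circ> \<iota>) slope (\<Sum>\<^sub>\<infinity>e\<in>E. (slope e)\<^sup>2 * len e)"
    by unfold_locales (use graph affine a energy in auto)
  then show ?thesis
    by blast
qed

lemma dist_bound_extends_to_closure:
  fixes g :: "'a::metric_space \<Rightarrow> real" and \<phi> :: "real \<Rightarrow> real"
  assumes "continuous_on X g" "A \<subseteq> X" "X \<subseteq> closure A" "continuous_on UNIV \<phi>"
    and bound: "\<And>a b. a \<in> A \<Longrightarrow> b \<in> A \<Longrightarrow> \<bar>g a - g b\<bar> \<le> \<phi> (dist a b)"
    and "p \<in> X" "q \<in> X"
  shows "\<bar>g p - g q\<bar> \<le> \<phi> (dist p q)"
proof -
  obtain x y where x: "\<And>n. x n \<in> A" "x \<longlonglongrightarrow> p" and y: "\<And>n. y n \<in> A" "y \<longlonglongrightarrow> q"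
    using assms(3,6,7) closure_sequential by (metis subsetD)
  have "(\<lambda>n. g (x n)) \<longlonglongrightarrow> g p" "(\<lambda>n. g (y n)) \<longlonglongrightarrow> g q"
    using x y assms(1,2,6,7)
    by (auto intro!: continuous_on_tendsto_compose[of X g, unfolded o_def] always_eventually)
  then have "(\<lambda>n. \<bar>g (x n) - g (y n)\<bar>) \<longlonglongrightarrow> \<bar>g p - g q\<bar>"
    by (intro tendsto_intros)
  moreover have "(\<lambda>n. \<phi> (dist (x n) (y n))) \<longlonglongrightarrow> \<phi> (dist p q)"
    using assms(4) x(2) y(2)
    by (intro continuous_on_tendsto_compose[of UNIV \<phi>, unfolded o_def] tendsto_intros) auto
  ultimately show ?thesis
    using bound x(1) y(1) by (intro LIMSEQ_le) auto
qed

lemma sqrt_bound_of_amgm_bound: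
  fixes a c d :: real
  assumes "0 < d" "\<And>\<mu>. 0 < \<mu> \<Longrightarrow> a \<le> (c * \<mu> + d / \<mu>) / 2"
  shows "a \<le> (c + 1) / 2 * sqrt d"
proof -
  have "d / sqrt d = sqrt d"
    using \<open>0 < d\<close> by (simp add: real_div_sqrt)
  then show ?thesis
    using assms(2)[of "sqrt d"] \<open>0 < d\<close> by (simp add: algebra_simps)
qed

lemma harmonic_H1_holder_half:
  assumes graph: "metric_graph V E src tgt len"
    and completion: "is_completion V E src tgt len X \<iota>"
    and harmonic: "harmonic V E src tgt len B X \<iota> g"
    and H1: "H1 V E src tgt len X \<iota> g"
  shows "\<exists>K. \<forall>p\<in>X. \<forall>q\<in>X. \<bar>g p - g q\<bar> \<le> K * sqrt (dist p q)"
proof -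
  obtain slope D where "edgewise_affine V E src tgt len (g \<circ> \<iota>) slope D"
    using harmonic_H1_edgewise_affine[OF graph harmonic H1] by blast
  then interpret edgewise_affine V E src tgt len "g \<circ> \<iota>" slope D .
  have bound: "\<bar>g p - g q\<bar> \<le> (3 * D * \<mu> + dist p q / \<mu>) / 2"
    if "p \<in> X" "q \<in> X" "0 < \<mu>" for p q \<mu>
  proof (rule dist_bound_extends_to_closure[of X g "\<iota> ` gpoints V E len"])
    show "continuous_on X g"
      using harmonic by (simp add: harmonic_def)
  next
    fix a b assume "a \<in> \<iota> ` gpoints V E len" "b \<in> \<iota> ` gpoints V E len"
    then show "\<bar>g a - g b\<bar> \<le> (3 * D * \<mu> + dist a b / \<mu>) / 2"
      using gdist_diff_le[OF _ _ \<open>0 < \<mu>\<close>] completion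
      by (auto simp: is_completion_def algebra_simps)
  qed (use completion that in \<open>auto simp: is_completion_def intro!: continuous_intros\<close>)
  have "\<bar>g p - g q\<bar> \<le> (3 * D + 1) / 2 * sqrt (dist p q)" if "p \<in> X" "q \<in> X" for p q
  proof (cases "p = q")
    case False
    then show ?thesis
      using bound[OF that] by (intro sqrt_bound_of_amgm_bound) auto
  qed simp
  then show ?thesis
    by blast
qed

lemma quarter_root_dist_not_holder_half:
  fixes p :: "'a::metric_space"
  assumes "p islimpt S"
  shows "\<not> (\<exists>K. \<forall>q\<in>S. sqrt (sqrt (dist q p)) \<le> K * sqrt (dist q p))"
proof
  assume "\<exists>K. \<forall>q\<in>S. sqrt (sqrt (dist q p)) \<le> K * sqrt (dist q p)"
  then obtain K where K: "\<And>q. q \<in> S \<Longrightarrow> sqrt (sqrt (dist q p)) \<le> K * sqrt (dist q p)"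
    by blast
  have "0 < (1 / (\<bar>K\<bar> + 1)) ^ 4"
    by simp
  then obtain q where q: "q \<in> S" "q \<noteq> p" "dist q p < (1 / (\<bar>K\<bar> + 1)) ^ 4"
    using assms islimpt_approachable by blast
  define s where "s = sqrt (sqrt (dist q p))"
  have "0 < s"
    using q by (simp add: s_def)
  have s2: "s\<^sup>2 = sqrt (dist q p)"
    by (simp add: s_def)
  have "s ^ 4 = (s\<^sup>2)\<^sup>2"
    by simp
  then have "s ^ 4 < (1 / (\<bar>K\<bar> + 1)) ^ 4"
    using q(3) s2 by simp
  then have "s < 1 / (\<bar>K\<bar> + 1)"
    by (rule power_less_imp_less_base) simp
  then have "\<bar>K\<bar> * s + s < 1"
    by (simp add: field_simps)
  moreover have "s \<le> K * s\<^sup>2"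
    using K[OF q(1)] s2 by (simp add: s_def)
  then have "1 \<le> K * s"
    using \<open>0 < s\<close> by (simp add: power2_eq_square)
  moreover have "K * s \<le> \<bar>K\<bar> * s"
    using \<open>0 < s\<close> by (simp add: mult_right_mono)
  ultimately show False
    using \<open>0 < s\<close> by linarith
qed

theorem proposition3p7:
  fixes V :: "'v set" and E :: "'e set" and src tgt :: "'e \<Rightarrow> 'v" and len :: "'e \<Rightarrow> real"
    and B :: "'v set" and X :: "'x::metric_space set" and \<iota> :: "('v, 'e) gpt \<Rightarrow> 'x"
  assumes G: "metric_graph V E src tgt len"
    and B: "B \<subseteq> V" "\<forall>v\<in>V. gdegree V E src tgt v = 1 \<longrightarrow> v \<in> B"
    and compl: "is_completion V E src tgt len X \<iota>"
    and cpt: "compact X"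
    and td: "totally_disconnected (cbdry V E len B X \<iota>)"
    and nonisol: "\<exists>p\<in>cbdry V E len B X \<iota>. p islimpt cbdry V E len B X \<iota>"
  shows "\<exists>F :: 'x \<Rightarrow> real. continuous_on (cbdry V E len B X \<iota>) F \<and>
           \<not> (\<exists>g. harmonic V E src tgt len B X \<iota> g \<and>
                  (\<forall>p\<in>cbdry V E len B X \<iota>. g p = F p) \<and>
                  H1 V E src tgt len X \<iota> g)"
proof -
  let ?C = "cbdry V E len B X \<iota>"
  obtain p where p: "p \<in> ?C" "p islimpt ?C"
    using nonisol by blast
  define F where "F x = sqrt (sqrt (dist x p))" for x
  have "\<not> (\<exists>g. harmonic V E src tgt len B X \<iota> g \<and> (\<forall>q\<in>?C. g q = F q) \<and> H1 V E src tgt len X \<iota> g)"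
  proof
    assume "\<exists>g. harmonic V E src tgt len B X \<iota> g \<and> (\<forall>q\<in>?C. g q = F q) \<and> H1 V E src tgt len X \<iota> g"
    then obtain g where harmonic: "harmonic V E src tgt len B X \<iota> g"
      and boundary: "\<forall>q\<in>?C. g q = F q" and H1: "H1 V E src tgt len X \<iota> g"
      by blast
    obtain K where K: "\<forall>q\<in>X. \<forall>q'\<in>X. \<bar>g q - g q'\<bar> \<le> K * sqrt (dist q q')"
      using harmonic_H1_holder_half[OF G compl harmonic H1] by blast
    have "sqrt (sqrt (dist q p)) \<le> K * sqrt (dist q p)" if "q \<in> ?C" for q
    proof -
      have "\<bar>g q - g p\<bar> \<le> K * sqrt (dist q p)"
        using K that p(1) by (auto simp: cbdry_def)
      moreover have "g q - g p = sqrt (sqrt (dist q p))"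
        using boundary that p(1) by (simp add: F_def)
      ultimately show ?thesis
        by simp
    qed
    then show False
      using quarter_root_dist_not_holder_half[OF p(2)] by blast
  qed
  moreover have "continuous_on ?C F"
    unfolding F_def by (intro continuous_intros)
  ultimately show ?thesis
    by blast
qed

end
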